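(* In the oligopoly game below, fix $\boldsymbol\sigma\in\{-1,1\}^n$ and let $N_+=\{i:\sigma_i=1\}$, $N_-=\{i:\sigma_i=-1\}$. There exists an equilibrium $(\mathbf A^*,\mathbf q^* )$ with $\mathbf a_i^*=\sigma_i\boldsymbol\beta$ for every $i$ if and only if $$(2+\alpha)-\frac{2+(n+1)\alpha}{2(1+\alpha)}\min_{j\in N_-}\gamma_j\;\le\;\boldsymbol\sigma^\top\boldsymbol\gamma\;\le\;(2+\alpha)+\frac{2+(n+1)\alpha}{2(1+\alpha)}\min_{j\in N_+}\gamma_j,$$ with the convention that the minimum over the empty set is $+\infty$. In such an equilibrium the output profile is uniquely determined as $$\mathbf q^*=\frac{\boldsymbol\gamma}{2+\alpha}-\phi(\boldsymbol\sigma)\,\boldsymbol\sigma,\qquad \phi(\boldsymbol\sigma)=\frac{\alpha(\boldsymbol\sigma^\top\boldsymbol\gamma-(2+\alpha))}{(2+\alpha)(2+(n+1)\alpha)}.$$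
   Context: Model: integers $n\ge2$, $m\ge2$; $\alpha>0$, $\boldsymbol\beta\in\mathbb R^m$ with $\|\boldsymbol\beta\|_2=1$, $\boldsymbol\gamma\in\mathbb R^n$ with all $\gamma_i>0$. Firm $i$ chooses a unit vector $\mathbf a_i\in\mathbb R^m$ and $q_i\ge0$, earning $\Pi_i=\alpha q_i\mathbf a_i^\top(\boldsymbol\beta-\sum_{j\ne i}q_j\mathbf a_j)-(1+\alpha)q_i^2+\gamma_iq_i$. $\mathbf A=[\mathbf a_1,\dots,\mathbf a_n]$. An equilibrium is a profile $(\mathbf A^*,\mathbf q^* )$ in which each $(\mathbf a_i^*,q_i^* )$ maximizes $\Pi_i$ over unit $\mathbf a_i$ and $q_i\ge 0$ given the others' choices. *)

theory Defs
  imports "HOL-Analysis.Analysis" "HOL-Library.Extended_Real"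
begin

text \<open>Firms are indexed by a finite type 'n (n = CARD('n)), product
  characteristics live in real^'m (m = CARD('m)).\<close>

definition profit ::
  "real \<Rightarrow> real^'m \<Rightarrow> ('n::finite \<Rightarrow> real) \<Rightarrow> ('n \<Rightarrow> real^'m) \<Rightarrow> ('n \<Rightarrow> real) \<Rightarrow> 'n \<Rightarrow> real"
  where
  "profit \<alpha> \<beta> \<gamma> A q i =
     \<alpha> * q i * (A i \<bullet> (\<beta> - (\<Sum>j\<in>UNIV - {i}. q j *\<^sub>R A j)))
     - (1 + \<alpha>) * (q i)\<^sup>2 + \<gamma> i * q i"

definition is_equilibrium ::
  "real \<Rightarrow> real^'m \<Rightarrow> ('n::finite \<Rightarrow> real) \<Rightarrow> ('n \<Rightarrow> real^'m) \<Rightarrow> ('n \<Rightarrow> real) \<Rightarrow> bool"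
  where
  "is_equilibrium \<alpha> \<beta> \<gamma> A q \<longleftrightarrow>
     (\<forall>i. norm (A i) = 1 \<and> q i \<ge> 0 \<and>
        (\<forall>a qi. norm a = 1 \<longrightarrow> qi \<ge> 0 \<longrightarrow>
           profit \<alpha> \<beta> \<gamma> (A(i := a)) (q(i := qi)) i \<le> profit \<alpha> \<beta> \<gamma> A q i))"

end

(*
  Along the sign profile a_j = sigma_j beta, the rivals of firm i only shift its residual
  demand c_i = 1 - sum_{j ~= i} sigma_j q_j along beta.  By Cauchy-Schwarz the best reply of
  firm i is a_i = sgn(c_i) beta together with the maximiser of the concave quadratic
  x (alpha |c_i| + gamma_i) - (1 + alpha) x^2, so (sigma_i beta, q_i) is a best reply iff
  sigma_i c_i >= 0 and q_i = (alpha sigma_i c_i + gamma_i) / (2 (1 + alpha)).  These first-order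
  conditions are linear in q: multiplying them by sigma_i and summing fixes sigma^T q, hence q
  itself, and the sign conditions sigma_i c_i >= 0 evaluated at this q are exactly the upper
  bound on sigma^T gamma (from the firms in N_+) and the lower bound (from those in N_-).
*)
theory Submission
  imports Defs
begin

lemma quadratic_vertex_form:
  fixes t K x :: real
  assumes "t \<noteq> 0"
  shows "x * K - t * x\<^sup>2 = K\<^sup>2 / (4 * t) - (2 * t * x - K)\<^sup>2 / (4 * t)"
  using assms by (simp add: field_simps power2_eq_square)

lemma deviation_payoff_le:
  fixes a \<beta> :: "'a::real_inner" and \<alpha> \<gamma> c x :: real
  assumes alpha_pos: "\<alpha> > 0" and a_unit: "norm a = 1" and beta_unit: "norm \<beta> = 1"
    and x_nonneg: "x \<ge> 0"
  shows "\<alpha> * x * ((a \<bullet> \<beta>) * c) - (1 + \<alpha>) * x\<^sup>2 + \<gamma> * x \<le> (\<alpha> * \<bar>c\<bar> + \<gamma>)\<^sup>2 / (4 * (1 + \<alpha>))"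
proof -
  define K where "K = \<alpha> * \<bar>c\<bar> + \<gamma>"
  have "\<bar>a \<bullet> \<beta>\<bar> \<le> 1"
    using Cauchy_Schwarz_ineq2[of a \<beta>] a_unit beta_unit by simp
  then have "(a \<bullet> \<beta>) * c \<le> \<bar>c\<bar>"
    by (metis abs_ge_self abs_mult dual_order.trans mult_left_le_one_le abs_ge_zero)
  then have "\<alpha> * x * ((a \<bullet> \<beta>) * c) \<le> \<alpha> * x * \<bar>c\<bar>"
    using alpha_pos x_nonneg by (simp add: mult_left_mono)
  then have "\<alpha> * x * ((a \<bullet> \<beta>) * c) - (1 + \<alpha>) * x\<^sup>2 + \<gamma> * x \<le> x * K - (1 + \<alpha>) * x\<^sup>2"
    unfolding K_def by (simp add: algebra_simps)
  also have "\<dots> \<le> K\<^sup>2 / (4 * (1 + \<alpha>))"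
    using quadratic_vertex_form[of "1 + \<alpha>" x K] alpha_pos by simp
  finally show ?thesis
    unfolding K_def .
qed

lemma best_response_iff:
  fixes \<beta> :: "'a::real_inner" and \<alpha> \<gamma> s c q :: real
  assumes alpha_pos: "\<alpha> > 0" and gamma_pos: "\<gamma> > 0" and beta_unit: "norm \<beta> = 1"
    and s_sign: "s \<in> {-1, 1}"
  shows "(q \<ge> 0 \<and> (\<forall>a x. norm a = 1 \<longrightarrow> x \<ge> 0 \<longrightarrow>
            \<alpha> * x * ((a \<bullet> \<beta>) * c) - (1 + \<alpha>) * x\<^sup>2 + \<gamma> * x
              \<le> \<alpha> * q * (s * c) - (1 + \<alpha>) * q\<^sup>2 + \<gamma> * q))
         \<longleftrightarrow> (s * c \<ge> 0 \<and> q = (\<alpha> * (s * c) + \<gamma>) / (2 * (1 + \<alpha>)))"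
proof -
  define K where "K = \<alpha> * \<bar>c\<bar> + \<gamma>"
  define M where "M = K\<^sup>2 / (4 * (1 + \<alpha>))"
  define x0 where "x0 = K / (2 * (1 + \<alpha>))"
  have K_pos: "K > 0"
    unfolding K_def using alpha_pos gamma_pos by (simp add: add_nonneg_pos)
  have x0_pos: "x0 > 0"
    unfolding x0_def using K_pos alpha_pos by simp
  have vertex: "x * K - (1 + \<alpha>) * x\<^sup>2 = M - (2 * (1 + \<alpha>) * x - K)\<^sup>2 / (4 * (1 + \<alpha>))" for x
    unfolding M_def using alpha_pos by (simp add: quadratic_vertex_form)
  have sc_le: "s * c \<le> \<bar>c\<bar>" and sc_nonneg_iff: "s * c \<ge> 0 \<longleftrightarrow> s * c = \<bar>c\<bar>"
    using s_sign by (elim insertE; auto)+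
  define a0 where "a0 = (if c \<ge> 0 then \<beta> else - \<beta>)"
  have a0_unit: "norm a0 = 1" and a0_inner: "(a0 \<bullet> \<beta>) * c = \<bar>c\<bar>"
    unfolding a0_def using beta_unit by (auto simp: dot_square_norm)
  have "2 * (1 + \<alpha>) * x0 = K"
    unfolding x0_def using alpha_pos by simp
  then have attained: "\<alpha> * x0 * ((a0 \<bullet> \<beta>) * c) - (1 + \<alpha>) * x0\<^sup>2 + \<gamma> * x0 = M"
    using vertex[of x0] unfolding a0_inner K_def by (simp add: algebra_simps)
  \<comment> \<open>the own payoff falls short of the maximal payoff M by two nonnegative terms\<close>
  have own: "\<alpha> * q * (s * c) - (1 + \<alpha>) * q\<^sup>2 + \<gamma> * q
      = M - (2 * (1 + \<alpha>) * q - K)\<^sup>2 / (4 * (1 + \<alpha>)) - \<alpha> * q * (\<bar>c\<bar> - s * c)"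
    using vertex[of q] unfolding K_def by (simp add: algebra_simps)
  show ?thesis
  proof
    assume best: "q \<ge> 0 \<and> (\<forall>a x. norm a = 1 \<longrightarrow> x \<ge> 0 \<longrightarrow>
            \<alpha> * x * ((a \<bullet> \<beta>) * c) - (1 + \<alpha>) * x\<^sup>2 + \<gamma> * x
              \<le> \<alpha> * q * (s * c) - (1 + \<alpha>) * q\<^sup>2 + \<gamma> * q)"
    then have "M \<le> \<alpha> * q * (s * c) - (1 + \<alpha>) * q\<^sup>2 + \<gamma> * q"
      using attained a0_unit x0_pos by (metis less_le)
    moreover have "0 \<le> (2 * (1 + \<alpha>) * q - K)\<^sup>2 / (4 * (1 + \<alpha>))" "0 \<le> \<alpha> * q * (\<bar>c\<bar> - s * c)"
      using alpha_pos best sc_le by simp_all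
    ultimately have "(2 * (1 + \<alpha>) * q - K)\<^sup>2 / (4 * (1 + \<alpha>)) = 0" "\<alpha> * q * (\<bar>c\<bar> - s * c) = 0"
      unfolding own by linarith+
    then have "q = x0" "q * (\<bar>c\<bar> - s * c) = 0"
      using alpha_pos unfolding x0_def by (auto simp: field_simps)
    then have "s * c = \<bar>c\<bar>"
      using x0_pos by simp
    then show "s * c \<ge> 0 \<and> q = (\<alpha> * (s * c) + \<gamma>) / (2 * (1 + \<alpha>))"
      using \<open>q = x0\<close> unfolding x0_def K_def by simp
  next
    assume "s * c \<ge> 0 \<and> q = (\<alpha> * (s * c) + \<gamma>) / (2 * (1 + \<alpha>))"
    then have "s * c = \<bar>c\<bar>" "q = x0"
      using sc_nonneg_iff unfolding x0_def K_def by auto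
    then have "\<alpha> * q * (s * c) - (1 + \<alpha>) * q\<^sup>2 + \<gamma> * q = M"
      using own alpha_pos unfolding x0_def by (simp add: field_simps)
    then show "q \<ge> 0 \<and> (\<forall>a x. norm a = 1 \<longrightarrow> x \<ge> 0 \<longrightarrow>
            \<alpha> * x * ((a \<bullet> \<beta>) * c) - (1 + \<alpha>) * x\<^sup>2 + \<gamma> * x
              \<le> \<alpha> * q * (s * c) - (1 + \<alpha>) * q\<^sup>2 + \<gamma> * q)"
      using deviation_payoff_le[OF alpha_pos _ beta_unit] \<open>q = x0\<close> x0_pos
      unfolding M_def K_def by simp
  qed
qed

lemma profit_sign_profile_deviation:
  fixes \<beta> :: "real^'m" and \<sigma> q :: "'n::finite \<Rightarrow> real"
  shows "profit \<alpha> \<beta> \<gamma> ((\<lambda>j. \<sigma> j *\<^sub>R \<beta>)(i := a)) (q(i := x)) i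
       = \<alpha> * x * ((a \<bullet> \<beta>) * (1 - (\<Sum>j\<in>UNIV. \<sigma> j * q j) + \<sigma> i * q i)) - (1 + \<alpha>) * x\<^sup>2 + \<gamma> i * x"
proof -
  have "(\<Sum>j\<in>UNIV - {i}. (q(i := x)) j *\<^sub>R ((\<lambda>j. \<sigma> j *\<^sub>R \<beta>)(i := a)) j)
      = (\<Sum>j\<in>UNIV - {i}. (\<sigma> j * q j) *\<^sub>R \<beta>)"
    by (rule sum.cong) auto
  also have "\<dots> = (\<Sum>j\<in>UNIV - {i}. \<sigma> j * q j) *\<^sub>R \<beta>"
    by (rule scaleR_sum_left[symmetric])
  also have "\<dots> = ((\<Sum>j\<in>UNIV. \<sigma> j * q j) - \<sigma> i * q i) *\<^sub>R \<beta>"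
    by (simp only: sum_diff1 finite UNIV_I if_True)
  finally have others: "(\<Sum>j\<in>UNIV - {i}. (q(i := x)) j *\<^sub>R ((\<lambda>j. \<sigma> j *\<^sub>R \<beta>)(i := a)) j)
      = ((\<Sum>j\<in>UNIV. \<sigma> j * q j) - \<sigma> i * q i) *\<^sub>R \<beta>" .
  then show ?thesis
    unfolding profit_def others by (simp add: inner_diff_right algebra_simps)
qed

lemma is_equilibrium_sign_profile_iff:
  fixes \<beta> :: "real^'m" and \<gamma> \<sigma> q :: "'n::finite \<Rightarrow> real"
  assumes alpha_pos: "\<alpha> > 0" and beta_unit: "norm \<beta> = 1" and gamma_pos: "\<forall>i. \<gamma> i > 0"
    and sigma_pm: "\<forall>i. \<sigma> i \<in> {-1, 1}"
  shows "is_equilibrium \<alpha> \<beta> \<gamma> (\<lambda>i. \<sigma> i *\<^sub>R \<beta>) q \<longleftrightarrow>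
    (\<forall>i. 0 \<le> \<sigma> i * (1 - (\<Sum>j\<in>UNIV. \<sigma> j * q j)) + q i \<and>
         (2 + \<alpha>) * q i = \<alpha> * \<sigma> i * (1 - (\<Sum>j\<in>UNIV. \<sigma> j * q j)) + \<gamma> i)"
proof -
  let ?A = "\<lambda>i. \<sigma> i *\<^sub>R \<beta>" and ?S = "\<Sum>j\<in>UNIV. \<sigma> j * q j"
  have firm_iff: "(norm (?A i) = 1 \<and> q i \<ge> 0 \<and>
      (\<forall>a x. norm a = 1 \<longrightarrow> x \<ge> 0 \<longrightarrow> profit \<alpha> \<beta> \<gamma> (?A(i := a)) (q(i := x)) i \<le> profit \<alpha> \<beta> \<gamma> ?A q i))
    \<longleftrightarrow> (0 \<le> \<sigma> i * (1 - ?S) + q i \<and> (2 + \<alpha>) * q i = \<alpha> * \<sigma> i * (1 - ?S) + \<gamma> i)" for i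
  proof -
    define c where "c = 1 - ?S + \<sigma> i * q i"
    have sigma_i: "\<sigma> i \<in> {-1, 1}"
      using sigma_pm by simp
    then have "\<sigma> i * \<sigma> i = 1"
      by (elim insertE) auto
    then have sigma_c: "\<sigma> i * c = \<sigma> i * (1 - ?S) + q i"
      unfolding c_def by algebra
    have unit: "norm (?A i) = 1"
      using sigma_i beta_unit by (elim insertE) auto
    have "?A(i := \<sigma> i *\<^sub>R \<beta>) = ?A"
      by auto
    then have own: "profit \<alpha> \<beta> \<gamma> ?A q i = \<alpha> * q i * (\<sigma> i * c) - (1 + \<alpha>) * (q i)\<^sup>2 + \<gamma> i * q i"
      using profit_sign_profile_deviation[of \<alpha> \<beta> \<gamma> \<sigma> i "?A i" q "q i"] beta_unit
      unfolding c_def by (simp add: dot_square_norm)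
    have deviation: "profit \<alpha> \<beta> \<gamma> (?A(i := a)) (q(i := x)) i
        = \<alpha> * x * ((a \<bullet> \<beta>) * c) - (1 + \<alpha>) * x\<^sup>2 + \<gamma> i * x" for a x
      unfolding c_def by (rule profit_sign_profile_deviation)
    have first_order: "q i = (\<alpha> * (\<sigma> i * c) + \<gamma> i) / (2 * (1 + \<alpha>))
        \<longleftrightarrow> (2 + \<alpha>) * q i = \<alpha> * \<sigma> i * (1 - ?S) + \<gamma> i"
      unfolding sigma_c using alpha_pos by (simp add: field_simps)
    show ?thesis
      unfolding own deviation
      using unit first_order best_response_iff[OF alpha_pos spec[OF gamma_pos] beta_unit sigma_i, of "q i" c]
      unfolding sigma_c by simp
  qed
  show ?thesis
    unfolding is_equilibrium_def firm_iff ..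
qed

lemma sign_weighted_sum_affine:
  fixes \<sigma> q r :: "'n::finite \<Rightarrow> real"
  assumes sigma_pm: "\<forall>i. \<sigma> i \<in> {-1, 1}" and linear: "\<forall>i. c * q i = \<sigma> i * v + r i"
  shows "c * (\<Sum>i\<in>UNIV. \<sigma> i * q i) = real CARD('n) * v + (\<Sum>i\<in>UNIV. \<sigma> i * r i)"
proof -
  have "c * (\<sigma> i * q i) = v + \<sigma> i * r i" for i
  proof -
    have "\<sigma> i = -1 \<or> \<sigma> i = 1"
      using sigma_pm by simp
    then have "\<sigma> i * \<sigma> i = 1"
      by auto
    have "c * (\<sigma> i * q i) = \<sigma> i * (c * q i)"
      by (rule mult.left_commute)
    also have "\<dots> = (\<sigma> i * \<sigma> i) * v + \<sigma> i * r i"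
      using linear by (simp add: distrib_left mult.assoc)
    finally show ?thesis
      using \<open>\<sigma> i * \<sigma> i = 1\<close> by simp
  qed
  then show ?thesis
    by (simp add: sum_distrib_left sum.distrib)
qed

lemma residual_demand_consistent_iff:
  fixes \<sigma> q \<gamma> :: "'n::finite \<Rightarrow> real"
  assumes alpha_pos: "\<alpha> > 0" and sigma_pm: "\<forall>i. \<sigma> i \<in> {-1, 1}"
    and first_order: "\<forall>i. (2 + \<alpha>) * q i = \<alpha> * \<sigma> i * u + \<gamma> i"
  shows "1 - (\<Sum>j\<in>UNIV. \<sigma> j * q j) = u
    \<longleftrightarrow> u = (2 + \<alpha> - (\<Sum>i\<in>UNIV. \<sigma> i * \<gamma> i)) / (2 + (real CARD('n) + 1) * \<alpha>)"
proof -
  define S where "S = (\<Sum>j\<in>UNIV. \<sigma> j * q j)"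
  define G where "G = (\<Sum>i\<in>UNIV. \<sigma> i * \<gamma> i)"
  define D where "D = 2 + (real CARD('n) + 1) * \<alpha>"
  have sum_eq: "(2 + \<alpha>) * S = real CARD('n) * (\<alpha> * u) + G"
    unfolding S_def G_def using sign_weighted_sum_affine[OF sigma_pm] first_order by (simp add: mult.assoc)
  have D_pos: "D > 0"
    unfolding D_def using alpha_pos by (simp add: add_pos_nonneg)
  have "1 - S = u \<longleftrightarrow> (2 + \<alpha>) * (1 - S) = (2 + \<alpha>) * u"
    using alpha_pos by simp
  also have "\<dots> \<longleftrightarrow> 2 + \<alpha> - G = D * u"
    using sum_eq unfolding D_def by (simp add: algebra_simps)
  also have "\<dots> \<longleftrightarrow> u = (2 + \<alpha> - G) / D"
    using D_pos by (auto simp: field_simps)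
  finally show ?thesis
    unfolding S_def G_def D_def .
qed

lemma first_order_solution_iff:
  fixes \<alpha> u G D s g x :: real
  assumes alpha_pos: "\<alpha> > 0" and u_eq: "u = (2 + \<alpha> - G) / D"
  shows "(2 + \<alpha>) * x = \<alpha> * s * u + g \<longleftrightarrow> x = g / (2 + \<alpha>) - \<alpha> * (G - (2 + \<alpha>)) / ((2 + \<alpha>) * D) * s"
proof -
  have identity: "g / (2 + \<alpha>) - \<alpha> * (G - (2 + \<alpha>)) / ((2 + \<alpha>) * D) * s = (\<alpha> * s * u + g) / (2 + \<alpha>)"
    unfolding u_eq by (simp add: add_divide_distrib diff_divide_distrib algebra_simps)
  have "(2 + \<alpha>) * x = \<alpha> * s * u + g \<longleftrightarrow> x = (\<alpha> * s * u + g) / (2 + \<alpha>)"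
    using alpha_pos by (simp add: eq_divide_eq mult.commute)
  then show ?thesis
    unfolding identity .
qed

lemma participation_constraint_iff:
  fixes \<alpha> u G D s g x :: real
  assumes alpha_pos: "\<alpha> > 0" and D_pos: "D > 0" and u_eq: "u = (2 + \<alpha> - G) / D"
    and first_order: "(2 + \<alpha>) * x = \<alpha> * s * u + g"
  shows "0 \<le> s * u + x \<longleftrightarrow> 0 \<le> s * (2 + \<alpha> - G) + D / (2 * (1 + \<alpha>)) * g"
proof -
  have "D / (2 * (1 + \<alpha>)) * (2 * (1 + \<alpha>) * s * u + g)
      = (D / (2 * (1 + \<alpha>)) * (2 * (1 + \<alpha>))) * (s * u) + D / (2 * (1 + \<alpha>)) * g"
    using distrib_left[of "D / (2 * (1 + \<alpha>))" "2 * (1 + \<alpha>) * s * u" g]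
    by (simp only: mult.assoc)
  also have "\<dots> = s * (D * u) + D / (2 * (1 + \<alpha>)) * g"
    using alpha_pos by (simp add: mult.left_commute)
  also have "D * u = 2 + \<alpha> - G"
    unfolding u_eq using D_pos by simp
  finally have scaled: "D / (2 * (1 + \<alpha>)) * (2 * (1 + \<alpha>) * s * u + g)
      = s * (2 + \<alpha> - G) + D / (2 * (1 + \<alpha>)) * g" .
  have "0 \<le> s * u + x \<longleftrightarrow> 0 \<le> (2 + \<alpha>) * (s * u + x)"
    using alpha_pos by (simp add: zero_le_mult_iff)
  also have "\<dots> \<longleftrightarrow> 0 \<le> 2 * (1 + \<alpha>) * s * u + g"
    using first_order by (simp add: algebra_simps)
  also have "\<dots> \<longleftrightarrow> 0 \<le> D / (2 * (1 + \<alpha>)) * (2 * (1 + \<alpha>) * s * u + g)"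
    using mult_le_cancel_left_pos[of "D / (2 * (1 + \<alpha>))" 0] alpha_pos D_pos by simp
  finally show ?thesis
    unfolding scaled .
qed

lemma is_equilibrium_sign_profile_closed_form:
  fixes \<beta> :: "real^'m" and \<gamma> \<sigma> q :: "'n::finite \<Rightarrow> real"
  assumes alpha_pos: "\<alpha> > 0" and beta_unit: "norm \<beta> = 1" and gamma_pos: "\<forall>i. \<gamma> i > 0"
    and sigma_pm: "\<forall>i. \<sigma> i \<in> {-1, 1}"
  defines "G \<equiv> \<Sum>i\<in>UNIV. \<sigma> i * \<gamma> i" and "D \<equiv> 2 + (real CARD('n) + 1) * \<alpha>"
  shows "is_equilibrium \<alpha> \<beta> \<gamma> (\<lambda>i. \<sigma> i *\<^sub>R \<beta>) q \<longleftrightarrow>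
    (\<forall>i. q i = \<gamma> i / (2 + \<alpha>) - \<alpha> * (G - (2 + \<alpha>)) / ((2 + \<alpha>) * D) * \<sigma> i) \<and>
    (\<forall>i. 0 \<le> \<sigma> i * (2 + \<alpha> - G) + D / (2 * (1 + \<alpha>)) * \<gamma> i)"
proof -
  define u where "u = (2 + \<alpha> - G) / D"
  let ?S = "\<Sum>j\<in>UNIV. \<sigma> j * q j"
  let ?first_order = "\<lambda>v. \<forall>i. (2 + \<alpha>) * q i = \<alpha> * \<sigma> i * v + \<gamma> i"
  have D_pos: "D > 0"
    unfolding D_def using alpha_pos by (simp add: add_pos_nonneg)
  have residual: "1 - ?S = u" if "?first_order (1 - ?S) \<or> ?first_order u"
    using that residual_demand_consistent_iff[OF alpha_pos sigma_pm]
    unfolding u_def G_def D_def by blast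
  have "is_equilibrium \<alpha> \<beta> \<gamma> (\<lambda>i. \<sigma> i *\<^sub>R \<beta>) q
      \<longleftrightarrow> ?first_order (1 - ?S) \<and> (\<forall>i. 0 \<le> \<sigma> i * (1 - ?S) + q i)"
    unfolding is_equilibrium_sign_profile_iff[OF alpha_pos beta_unit gamma_pos sigma_pm] by blast
  also have "\<dots> \<longleftrightarrow> ?first_order u \<and> (\<forall>i. 0 \<le> \<sigma> i * u + q i)"
    using residual by force
  also have "\<dots> \<longleftrightarrow> (\<forall>i. q i = \<gamma> i / (2 + \<alpha>) - \<alpha> * (G - (2 + \<alpha>)) / ((2 + \<alpha>) * D) * \<sigma> i) \<and>
      (\<forall>i. 0 \<le> \<sigma> i * (2 + \<alpha> - G) + D / (2 * (1 + \<alpha>)) * \<gamma> i)"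
    using first_order_solution_iff[OF alpha_pos u_def] participation_constraint_iff[OF alpha_pos D_pos u_def]
    by blast
  finally show ?thesis .
qed

lemma INF_ereal_eq_Min:
  fixes g :: "'a \<Rightarrow> real"
  assumes "finite J" and "J \<noteq> {}"
  shows "(INF j\<in>J. ereal (g j)) = ereal (Min (g ` J))"
proof -
  have "mono ereal"
    by (rule monoI) simp
  then have "ereal (Min (g ` J)) = Min (ereal ` g ` J)"
    using assms by (simp add: mono_Min_commute)
  also have "\<dots> = (INF j\<in>J. ereal (g j))"
    using assms by (simp add: Min_Inf image_comp)
  finally show ?thesis ..
qed

lemma ereal_le_plus_times_INF_iff:
  fixes g :: "'a \<Rightarrow> real"
  assumes "finite J" and "k > 0"
  shows "ereal x \<le> ereal c + ereal k * (INF j\<in>J. ereal (g j)) \<longleftrightarrow> (\<forall>j\<in>J. x \<le> c + k * g j)"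
proof (cases "J = {}")
  case False
  have "x \<le> c + k * Min (g ` J) \<longleftrightarrow> (x - c) / k \<le> Min (g ` J)"
    using assms by (simp add: field_simps)
  also have "\<dots> \<longleftrightarrow> (\<forall>j\<in>J. (x - c) / k \<le> g j)"
    using assms False by simp
  also have "\<dots> \<longleftrightarrow> (\<forall>j\<in>J. x \<le> c + k * g j)"
    using assms by (simp add: field_simps)
  finally show ?thesis
    using INF_ereal_eq_Min[OF assms(1) False] by simp
qed (use assms in \<open>simp add: top_ereal_def\<close>)

lemma ereal_minus_times_INF_le_iff:
  fixes g :: "'a \<Rightarrow> real"
  assumes "finite J" and "k > 0"
  shows "ereal c - ereal k * (INF j\<in>J. ereal (g j)) \<le> ereal x \<longleftrightarrow> (\<forall>j\<in>J. c - k * g j \<le> x)"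
proof (cases "J = {}")
  case False
  have "c - k * Min (g ` J) \<le> x \<longleftrightarrow> (c - x) / k \<le> Min (g ` J)"
    using assms by (simp add: field_simps)
  also have "\<dots> \<longleftrightarrow> (\<forall>j\<in>J. (c - x) / k \<le> g j)"
    using assms False by simp
  also have "\<dots> \<longleftrightarrow> (\<forall>j\<in>J. c - k * g j \<le> x)"
    using assms by (simp add: field_simps)
  finally show ?thesis
    using INF_ereal_eq_Min[OF assms(1) False] by simp
qed (use assms in \<open>simp add: top_ereal_def\<close>)

theorem proposition4:
  fixes \<alpha> :: real and \<beta> :: "real^'m::finite" and \<gamma> :: "'n::finite \<Rightarrow> real"
    and \<sigma> :: "'n \<Rightarrow> real"
  assumes n2: "CARD('n) \<ge> 2" and m2: "CARD('m) \<ge> 2"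
    and alpha_pos: "\<alpha> > 0" and beta_unit: "norm \<beta> = 1"
    and gamma_pos: "\<forall>i. \<gamma> i > 0"
    and sigma_pm: "\<forall>i. \<sigma> i \<in> {-1, 1}"
  shows "((\<exists>q. is_equilibrium \<alpha> \<beta> \<gamma> (\<lambda>i. \<sigma> i *\<^sub>R \<beta>) q) \<longleftrightarrow>
          ereal (2 + \<alpha>) - ereal ((2 + (real CARD('n) + 1) * \<alpha>) / (2 * (1 + \<alpha>)))
              * (INF j\<in>{j. \<sigma> j = -1}. ereal (\<gamma> j))
            \<le> ereal (\<Sum>i\<in>UNIV. \<sigma> i * \<gamma> i) \<and>
          ereal (\<Sum>i\<in>UNIV. \<sigma> i * \<gamma> i)
            \<le> ereal (2 + \<alpha>) + ereal ((2 + (real CARD('n) + 1) * \<alpha>) / (2 * (1 + \<alpha>)))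
              * (INF j\<in>{j. \<sigma> j = 1}. ereal (\<gamma> j)))
       \<and> (\<forall>q. is_equilibrium \<alpha> \<beta> \<gamma> (\<lambda>i. \<sigma> i *\<^sub>R \<beta>) q \<longrightarrow>
            q = (\<lambda>i. \<gamma> i / (2 + \<alpha>)
                 - (\<alpha> * ((\<Sum>k\<in>UNIV. \<sigma> k * \<gamma> k) - (2 + \<alpha>))
                    / ((2 + \<alpha>) * (2 + (real CARD('n) + 1) * \<alpha>))) * \<sigma> i))"
proof -
  define G where "G = (\<Sum>i\<in>UNIV. \<sigma> i * \<gamma> i)"
  define \<kappa> where "\<kappa> = (2 + (real CARD('n) + 1) * \<alpha>) / (2 * (1 + \<alpha>))"
  have kappa_pos: "\<kappa> > 0"
    unfolding \<kappa>_def using alpha_pos by (simp add: add_pos_nonneg)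
  have equilibrium_iff: "is_equilibrium \<alpha> \<beta> \<gamma> (\<lambda>i. \<sigma> i *\<^sub>R \<beta>) q \<longleftrightarrow>
      q = (\<lambda>i. \<gamma> i / (2 + \<alpha>)
             - (\<alpha> * (G - (2 + \<alpha>)) / ((2 + \<alpha>) * (2 + (real CARD('n) + 1) * \<alpha>))) * \<sigma> i) \<and>
      (\<forall>i. 0 \<le> \<sigma> i * (2 + \<alpha> - G) + \<kappa> * \<gamma> i)" for q
    using is_equilibrium_sign_profile_closed_form[OF alpha_pos beta_unit gamma_pos sigma_pm, of q]
    unfolding G_def \<kappa>_def by (simp add: fun_eq_iff)
  have "0 \<le> \<sigma> i * (2 + \<alpha> - G) + \<kappa> * \<gamma> i \<longleftrightarrow>
      (\<sigma> i = -1 \<longrightarrow> 2 + \<alpha> - \<kappa> * \<gamma> i \<le> G) \<and> (\<sigma> i = 1 \<longrightarrow> G \<le> 2 + \<alpha> + \<kappa> * \<gamma> i)" for i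
    using sigma_pm by (elim allE insertE) auto
  then have conditions_iff: "(\<forall>i. 0 \<le> \<sigma> i * (2 + \<alpha> - G) + \<kappa> * \<gamma> i) \<longleftrightarrow>
      (\<forall>j\<in>{j. \<sigma> j = -1}. 2 + \<alpha> - \<kappa> * \<gamma> j \<le> G) \<and> (\<forall>j\<in>{j. \<sigma> j = 1}. G \<le> 2 + \<alpha> + \<kappa> * \<gamma> j)"
    by auto
  show ?thesis
    unfolding \<kappa>_def[symmetric] G_def[symmetric] equilibrium_iff
      ereal_minus_times_INF_le_iff[OF finite kappa_pos] ereal_le_plus_times_INF_iff[OF finite kappa_pos]
    using conditions_iff by auto
qed

end
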